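(* Let $G$ be a digraph. Then $G^{\top\bot}$ is congruence modular (i.e. has Gumm polymorphisms) if and only if $G^{\top\bot}$ is congruence distributive (i.e. has Jónsson polymorphisms).
   Context: Digraphs are finite and loopless: $G=(V,E)$ with $E\subseteq V\times V$. $G^{\top}$ is the digraph on $V\cup\{\top\}$ ($\top\notin V$ new) with edge set $E\cup\{(v,\top):v\in V\}$; $G^\bot$ is the digraph on $V\cup\{\bot\}$ with edge set $E\cup\{(\bot,v):v\in V\}$; $G^{\top\bot}=(G^\top)^\bot$. A polymorphism of arity $k$ is a map $f:V^k\to V$ with $(f(a_1,\dots,a_k),f(b_1,\dots,b_k))\in E$ whenever all $(a_i,b_i)\in E$. Gumm polymorphisms: ternary polymorphisms $s_0,\dots,s_{2n},p$ with $s_0(x,y,z)=x$; $s_i(x,y,x)=x$ for all $i\le 2n$; $s_i(x,y,y)=s_{i+1}(x,y,y)$ for even $i<2n$; $s_i(x,x,y)=s_{i+1}(x,x,y)$ for odd $i<2n$; $s_{2n}(x,y,y)=p(x,y,y)$; $p(x,x,y)=y$ (identically on the vertex set). Jónsson polymorphisms: ternary polymorphisms $J_0,\dots,J_n$ with $J_0(x,y,z)=x$; $J_i(x,y,x)=x$ for all $i\le n$; $J_i(x,x,y)=J_{i+1}(x,x,y)$ for even $i<n$; $J_i(x,y,y)=J_{i+1}(x,y,y)$ for odd $i<n$; $J_n(x,y,z)=z$. *)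

theory Defs
  imports Main
begin

type_synonym 'a digraph = "'a set \<times> ('a \<times> 'a) set"

definition is_digraph :: "'a digraph \<Rightarrow> bool" where
  "is_digraph G \<longleftrightarrow> finite (fst G) \<and> snd G \<subseteq> fst G \<times> fst G
     \<and> (\<forall>v. (v, v) \<notin> snd G)"

text \<open>G^top: new vertex None (=top), old vertices embedded via Some.\<close>
definition add_top :: "'a digraph \<Rightarrow> 'a option digraph" where
  "add_top G = (Some ` fst G \<union> {None},
                map_prod Some Some ` snd G \<union> {(Some v, None) | v. v \<in> fst G})"

text \<open>G^bot: new vertex None (=bot), old vertices embedded via Some.\<close>
definition add_bot :: "'a digraph \<Rightarrow> 'a option digraph" where
  "add_bot G = (Some ` fst G \<union> {None},
                map_prod Some Some ` snd G \<union> {(None, Some v) | v. v \<in> fst G})"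

definition add_top_bot :: "'a digraph \<Rightarrow> 'a option option digraph" where
  "add_top_bot G = add_bot (add_top G)"

definition ternary_polymorphism :: "'a digraph \<Rightarrow> ('a \<Rightarrow> 'a \<Rightarrow> 'a \<Rightarrow> 'a) \<Rightarrow> bool" where
  "ternary_polymorphism G f \<longleftrightarrow>
     (\<forall>x\<in>fst G. \<forall>y\<in>fst G. \<forall>z\<in>fst G. f x y z \<in> fst G) \<and>
     (\<forall>a1 a2 a3 b1 b2 b3. (a1, b1) \<in> snd G \<and> (a2, b2) \<in> snd G \<and> (a3, b3) \<in> snd G
        \<longrightarrow> (f a1 a2 a3, f b1 b2 b3) \<in> snd G)"

definition has_gumm_polymorphisms :: "'a digraph \<Rightarrow> bool" where
  "has_gumm_polymorphisms G \<longleftrightarrow>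
    (\<exists>(n::nat) (s :: nat \<Rightarrow> 'a \<Rightarrow> 'a \<Rightarrow> 'a \<Rightarrow> 'a) p.
       (\<forall>i\<le>2*n. ternary_polymorphism G (s i)) \<and> ternary_polymorphism G p \<and>
       (\<forall>x\<in>fst G. \<forall>y\<in>fst G. \<forall>z\<in>fst G. s 0 x y z = x) \<and>
       (\<forall>i\<le>2*n. \<forall>x\<in>fst G. \<forall>y\<in>fst G. s i x y x = x) \<and>
       (\<forall>i<2*n. even i \<longrightarrow> (\<forall>x\<in>fst G. \<forall>y\<in>fst G. s i x y y = s (Suc i) x y y)) \<and>
       (\<forall>i<2*n. odd i \<longrightarrow> (\<forall>x\<in>fst G. \<forall>y\<in>fst G. s i x x y = s (Suc i) x x y)) \<and>
       (\<forall>x\<in>fst G. \<forall>y\<in>fst G. s (2*n) x y y = p x y y) \<and>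
       (\<forall>x\<in>fst G. \<forall>y\<in>fst G. p x x y = y))"

definition has_jonsson_polymorphisms :: "'a digraph \<Rightarrow> bool" where
  "has_jonsson_polymorphisms G \<longleftrightarrow>
    (\<exists>(n::nat) (J :: nat \<Rightarrow> 'a \<Rightarrow> 'a \<Rightarrow> 'a \<Rightarrow> 'a).
       (\<forall>i\<le>n. ternary_polymorphism G (J i)) \<and>
       (\<forall>x\<in>fst G. \<forall>y\<in>fst G. \<forall>z\<in>fst G. J 0 x y z = x) \<and>
       (\<forall>i\<le>n. \<forall>x\<in>fst G. \<forall>y\<in>fst G. J i x y x = x) \<and>
       (\<forall>i<n. even i \<longrightarrow> (\<forall>x\<in>fst G. \<forall>y\<in>fst G. J i x x y = J (Suc i) x x y)) \<and>
       (\<forall>i<n. odd i \<longrightarrow> (\<forall>x\<in>fst G. \<forall>y\<in>fst G. J i x y y = J (Suc i) x y y)) \<and>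
       (\<forall>x\<in>fst G. \<forall>y\<in>fst G. \<forall>z\<in>fst G. J n x y z = z))"

end

theory Submission
  imports Defs
begin

(* Jonsson polymorphisms always yield Gumm polymorphisms: prepend a first projection and take
   p to be the third projection.  Conversely, a Gumm chain s_0, ..., s_2n, p becomes a Jonsson
   chain x, s_0, ..., s_2n, p, z as soon as p also satisfies p(x,y,x) = x.  In G^top-bot this
   can always be arranged by redefining p as x on the diagonal x = z: if a triple of edges
   (a_i, b_i) has a1 = a3 but b1 <> b3, replace the first two edges by edges (bot, b_i) and use
   p(bot,bot,a3) = a3; dually with top when b1 = b3 but a1 <> a3.  So the argument works in any
   digraph with vertices bot and top such that (bot, b) and (a, top) are edges for every edge
   (a, b). *)

locale gumm_chain =
  fixes H :: "'a digraph" and n :: nat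
    and s :: "nat \<Rightarrow> 'a \<Rightarrow> 'a \<Rightarrow> 'a \<Rightarrow> 'a" and p :: "'a \<Rightarrow> 'a \<Rightarrow> 'a \<Rightarrow> 'a"
  assumes s_polymorphism: "i \<le> 2*n \<Longrightarrow> ternary_polymorphism H (s i)"
    and p_polymorphism: "ternary_polymorphism H p"
    and s_first: "x \<in> fst H \<Longrightarrow> y \<in> fst H \<Longrightarrow> z \<in> fst H \<Longrightarrow> s 0 x y z = x"
    and s_xyx: "i \<le> 2*n \<Longrightarrow> x \<in> fst H \<Longrightarrow> y \<in> fst H \<Longrightarrow> s i x y x = x"
    and s_even: "i < 2*n \<Longrightarrow> even i \<Longrightarrow> x \<in> fst H \<Longrightarrow> y \<in> fst H
      \<Longrightarrow> s i x y y = s (Suc i) x y y"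
    and s_odd: "i < 2*n \<Longrightarrow> odd i \<Longrightarrow> x \<in> fst H \<Longrightarrow> y \<in> fst H
      \<Longrightarrow> s i x x y = s (Suc i) x x y"
    and s_last: "x \<in> fst H \<Longrightarrow> y \<in> fst H \<Longrightarrow> s (2*n) x y y = p x y y"
    and p_xxy: "x \<in> fst H \<Longrightarrow> y \<in> fst H \<Longrightarrow> p x x y = y"

locale jonsson_chain =
  fixes H :: "'a digraph" and n :: nat and J :: "nat \<Rightarrow> 'a \<Rightarrow> 'a \<Rightarrow> 'a \<Rightarrow> 'a"
  assumes J_polymorphism: "i \<le> n \<Longrightarrow> ternary_polymorphism H (J i)"
    and J_first: "x \<in> fst H \<Longrightarrow> y \<in> fst H \<Longrightarrow> z \<in> fst H \<Longrightarrow> J 0 x y z = x"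
    and J_xyx: "i \<le> n \<Longrightarrow> x \<in> fst H \<Longrightarrow> y \<in> fst H \<Longrightarrow> J i x y x = x"
    and J_even: "i < n \<Longrightarrow> even i \<Longrightarrow> x \<in> fst H \<Longrightarrow> y \<in> fst H
      \<Longrightarrow> J i x x y = J (Suc i) x x y"
    and J_odd: "i < n \<Longrightarrow> odd i \<Longrightarrow> x \<in> fst H \<Longrightarrow> y \<in> fst H
      \<Longrightarrow> J i x y y = J (Suc i) x y y"
    and J_last: "x \<in> fst H \<Longrightarrow> y \<in> fst H \<Longrightarrow> z \<in> fst H \<Longrightarrow> J n x y z = z"

lemma has_gumm_polymorphisms_iff_gumm_chain:
  "has_gumm_polymorphisms H \<longleftrightarrow> (\<exists>n s p. gumm_chain H n s p)"
  unfolding has_gumm_polymorphisms_def gumm_chain_def by (simp add: Ball_def)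

lemma has_jonsson_polymorphisms_iff_jonsson_chain:
  "has_jonsson_polymorphisms H \<longleftrightarrow> (\<exists>n J. jonsson_chain H n J)"
  unfolding has_jonsson_polymorphisms_def jonsson_chain_def by (simp add: Ball_def)

lemma first_projection_polymorphism: "ternary_polymorphism H (\<lambda>x y z. x)"
  unfolding ternary_polymorphism_def by auto

lemma third_projection_polymorphism: "ternary_polymorphism H (\<lambda>x y z. z)"
  unfolding ternary_polymorphism_def by auto

context jonsson_chain
begin

lemma J_min_even:
  "even i \<Longrightarrow> x \<in> fst H \<Longrightarrow> y \<in> fst H \<Longrightarrow> J (min i n) x x y = J (min (Suc i) n) x x y"
  using J_even by (cases "i < n") (simp_all add: min_def)

lemma J_min_odd:
  "odd i \<Longrightarrow> x \<in> fst H \<Longrightarrow> y \<in> fst H \<Longrightarrow> J (min i n) x y y = J (min (Suc i) n) x y y"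
  using J_odd by (cases "i < n") (simp_all add: min_def)

lemma has_gumm_polymorphisms: "has_gumm_polymorphisms H"
proof -
  define s where "s i = (case i of 0 \<Rightarrow> (\<lambda>x y z. x) | Suc k \<Rightarrow> J (min k n))" for i
  have s_range: "s i \<in> insert (\<lambda>x y z. x) (J ` {..n})" for i
    by (cases i) (auto simp: s_def)
  have "gumm_chain H (Suc n) s (\<lambda>x y z. z)"
  proof
    show "ternary_polymorphism H (s i)" for i
      using s_range[of i] J_polymorphism first_projection_polymorphism[of H] by auto
    show "s i x y x = x" if "x \<in> fst H" "y \<in> fst H" for i x y
      using s_range[of i] J_xyx that by auto
    show "s i x y y = s (Suc i) x y y" if "even i" "x \<in> fst H" "y \<in> fst H" for i x y
      using that by (cases i) (simp_all add: s_def J_first J_min_odd)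
    show "s i x x y = s (Suc i) x x y" if "odd i" "x \<in> fst H" "y \<in> fst H" for i x y
      using that by (cases i) (simp_all add: s_def J_min_even)
  qed (simp_all add: s_def J_last third_projection_polymorphism)
  then show ?thesis
    using has_gumm_polymorphisms_iff_gumm_chain by blast
qed

end

lemma has_gumm_polymorphisms_if_jonsson:
  "has_jonsson_polymorphisms H \<Longrightarrow> has_gumm_polymorphisms H"
  using has_jonsson_polymorphisms_iff_jonsson_chain jonsson_chain.has_gumm_polymorphisms by blast

definition outer_absorbing :: "('a \<Rightarrow> 'a \<Rightarrow> 'a \<Rightarrow> 'a) \<Rightarrow> 'a \<Rightarrow> 'a \<Rightarrow> 'a \<Rightarrow> 'a" where
  "outer_absorbing p x y z = (if x = z then x else p x y z)"

context gumm_chain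
begin

lemma has_jonsson_polymorphisms_if_p_xyx:
  assumes p_xyx: "\<And>x y. x \<in> fst H \<Longrightarrow> y \<in> fst H \<Longrightarrow> p x y x = x"
  shows "has_jonsson_polymorphisms H"
proof -
  define J where "J i = (if i = 0 then (\<lambda>x y z. x) else if i \<le> 2*n + 1 then s (i - 1)
    else if i = 2*n + 2 then p else (\<lambda>x y z. z))" for i
  have J_0: "J 0 = (\<lambda>x y z. x)" and J_s: "k \<le> 2*n \<Longrightarrow> J (Suc k) = s k"
    and J_p: "J (Suc (Suc (2*n))) = p" and J_last: "J (Suc (Suc (Suc (2*n)))) = (\<lambda>x y z. z)"
    for k
    by (simp_all add: J_def)
  have J_range: "J i \<in> {\<lambda>x y z. x, \<lambda>x y z. z, p} \<union> s ` {..2*n}" for i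
    by (auto simp: J_def)
  have "jonsson_chain H (2*n + 3) J"
  proof
    show "ternary_polymorphism H (J i)" for i
      using J_range[of i] s_polymorphism p_polymorphism first_projection_polymorphism[of H]
        third_projection_polymorphism[of H] by auto
    show "J i x y x = x" if "x \<in> fst H" "y \<in> fst H" for i x y
      using J_range[of i] s_xyx p_xyx that by auto
    show "J i x x y = J (Suc i) x x y"
      if i: "i < 2*n + 3" "even i" and xy: "x \<in> fst H" "y \<in> fst H" for i x y
    proof -
      consider "i = 0" | k where "i = Suc k" "odd k" "k < 2*n" | "i = 2*n + 2"
      proof (cases i)
        case (Suc k)
        with i have "odd k" "k < 2*n \<or> i = 2*n + 2" by auto presburger
        with Suc that show ?thesis by blast
      qed (use that in blast)
      then show ?thesis
        by cases (simp_all add: J_0 J_s J_p J_last s_first s_odd p_xxy xy)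
    qed
    show "J i x y y = J (Suc i) x y y"
      if i: "i < 2*n + 3" "odd i" and xy: "x \<in> fst H" "y \<in> fst H" for i x y
    proof -
      consider k where "i = Suc k" "even k" "k < 2*n" | "i = 2*n + 1"
      proof (cases i)
        case (Suc k)
        with i have "even k" "k < 2*n \<or> i = 2*n + 1" by auto
        with Suc that show ?thesis by blast
      qed (use i in simp)
      then show ?thesis
        by cases (simp_all add: J_s J_p s_even s_last xy)
    qed
  qed (simp_all add: J_def)
  then show ?thesis
    using has_jonsson_polymorphisms_iff_jonsson_chain by blast
qed

lemma gumm_chain_outer_absorbing:
  assumes "ternary_polymorphism H (outer_absorbing p)"
  shows "gumm_chain H n s (outer_absorbing p)"
  using assms s_polymorphism s_first s_xyx s_even s_odd s_last p_xxy
  by unfold_locales (auto simp: outer_absorbing_def)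

end

definition bounded_by :: "'a digraph \<Rightarrow> 'a \<Rightarrow> 'a \<Rightarrow> bool" where
  "bounded_by H lo hi \<longleftrightarrow> snd H \<subseteq> fst H \<times> fst H \<and>
     (\<forall>(a, b) \<in> snd H. (lo, b) \<in> snd H \<and> (a, hi) \<in> snd H)"

lemma add_top_bot_bounded_by:
  assumes "is_digraph G"
  shows "bounded_by (add_top_bot G) None (Some None)"
  using assms unfolding bounded_by_def is_digraph_def add_top_bot_def add_bot_def add_top_def
  by auto

lemma outer_absorbing_polymorphism:
  assumes bounded: "bounded_by H lo hi"
    and p_polymorphism: "ternary_polymorphism H p"
    and p_xxy: "\<And>x y. x \<in> fst H \<Longrightarrow> y \<in> fst H \<Longrightarrow> p x x y = y"
  shows "ternary_polymorphism H (outer_absorbing p)"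
  unfolding ternary_polymorphism_def
proof (intro conjI allI impI)
  show "\<forall>x\<in>fst H. \<forall>y\<in>fst H. \<forall>z\<in>fst H. outer_absorbing p x y z \<in> fst H"
    using p_polymorphism unfolding ternary_polymorphism_def outer_absorbing_def by auto
next
  fix a1 a2 a3 b1 b2 b3
  assume "(a1, b1) \<in> snd H \<and> (a2, b2) \<in> snd H \<and> (a3, b3) \<in> snd H"
  then have e1: "(a1, b1) \<in> snd H" and e2: "(a2, b2) \<in> snd H" and e3: "(a3, b3) \<in> snd H"
    by auto
  have edge: "(p a1 a2 a3, p b1 b2 b3) \<in> snd H"
    if "(a1, b1) \<in> snd H" "(a2, b2) \<in> snd H" "(a3, b3) \<in> snd H" for a1 a2 a3 b1 b2 b3
    using that p_polymorphism unfolding ternary_polymorphism_def by blast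
  have in_V: "a \<in> fst H" "b \<in> fst H" if "(a, b) \<in> snd H" for a b
    using that bounded unfolding bounded_by_def by auto
  have from_lo: "(lo, b) \<in> snd H" and to_hi: "(a, hi) \<in> snd H" if "(a, b) \<in> snd H" for a b
    using that bounded unfolding bounded_by_def by auto
  show "(outer_absorbing p a1 a2 a3, outer_absorbing p b1 b2 b3) \<in> snd H"
  proof (cases "a1 = a3"; cases "b1 = b3")
    assume "a1 = a3" "b1 \<noteq> b3"
    have "(p lo lo a3, p b1 b2 b3) \<in> snd H"
      using edge[OF from_lo[OF e1] from_lo[OF e2] e3] .
    moreover have "p lo lo a3 = a3"
      using p_xxy in_V from_lo[OF e1] e3 by blast
    ultimately show ?thesis
      using \<open>a1 = a3\<close> \<open>b1 \<noteq> b3\<close> unfolding outer_absorbing_def by simp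
  next
    assume "a1 \<noteq> a3" "b1 = b3"
    have "(p a1 a2 a3, p hi hi b3) \<in> snd H"
      using edge[OF to_hi[OF e1] to_hi[OF e2] e3] .
    moreover have "p hi hi b3 = b3"
      using p_xxy in_V to_hi[OF e1] e3 by blast
    ultimately show ?thesis
      using \<open>a1 \<noteq> a3\<close> \<open>b1 = b3\<close> unfolding outer_absorbing_def by simp
  qed (use e1 edge[OF e1 e2 e3] in \<open>simp_all add: outer_absorbing_def\<close>)
qed

lemma has_jonsson_polymorphisms_if_gumm_bounded:
  assumes bounded: "bounded_by H lo hi" and gumm: "has_gumm_polymorphisms H"
  shows "has_jonsson_polymorphisms H"
proof -
  obtain n s p where chain: "gumm_chain H n s p"
    using gumm has_gumm_polymorphisms_iff_gumm_chain by blast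
  have "ternary_polymorphism H (outer_absorbing p)"
    using outer_absorbing_polymorphism[OF bounded] gumm_chain.p_polymorphism[OF chain]
      gumm_chain.p_xxy[OF chain] by blast
  then have "gumm_chain H n s (outer_absorbing p)"
    by (rule gumm_chain.gumm_chain_outer_absorbing[OF chain])
  then show ?thesis
    by (rule gumm_chain.has_jonsson_polymorphisms_if_p_xyx) (simp add: outer_absorbing_def)
qed

theorem theorem7p5:
  fixes G :: "'a digraph"
  assumes "is_digraph G"
  shows "has_gumm_polymorphisms (add_top_bot G) \<longleftrightarrow> has_jonsson_polymorphisms (add_top_bot G)"
  using has_jonsson_polymorphisms_if_gumm_bounded[OF add_top_bot_bounded_by[OF assms]]
    has_gumm_polymorphisms_if_jonsson by blast

end
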